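(* Let $A$ be a ring and $|\cdot|:A\to R$ a pre-archimedean generalized seminorm, i.e. $|a+b|\le\max(|2|,1)\cdot\max(|a|,|b|)$ for all $a,b\in A$. Then the following are equivalent: (i) $|\cdot|$ is non-archimedean, i.e. $|a+b|\le\max(|a|,|b|)$ for all $a,b\in A$; (ii) $|n|\le1$ for all $n\in\mathbb{N}$; (iii) $|2|\le1$. Moreover, if $R_2\subset R^\times$ denotes the convex subgroup generated by $|2|$, then the induced map $|\cdot|':A\to R_{R^\times/R_2}$ (sending $a$ to $0$ if $|a|=0$ and to the class of $|a|$ otherwise) is a non-archimedean seminorm.
   Context: A halo is a commutative unital semiring with a partial order compatible with $+$ and $\cdot$; an aura is a halo whose semiring is a semifield; positive means $0<1$. A generalized seminorm on a ring $A$ is a map $|\cdot|:A\to R$ into a positive totally ordered aura $R$ with $|0|=0$, $|1|=1$, $|a+b|\le|a|+|b|$, $|ab|\le|a||b|$; here $n\in\mathbb{N}$ denotes $1+\dots+1$ in $A$. $R^\times=R\setminus\{0\}$ is a totally ordered abelian group; a subgroup $H$ is convex if $g<h<k$ with $g,k\in H$ implies $h\in H$. For a totally ordered group $\Gamma$, $R_\Gamma=\{0\}\cup\Gamma$ is the halo with $0$ below and absorbing all elements of $\Gamma$, the order and multiplication of $\Gamma$, and addition $a+b=\max(a,b)$; $R^\times/R_2$ carries the quotient total order. *)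

theory Defs
  imports Main
begin

class pos_tot_aura = comm_semiring_1 + linorder +
  assumes aura_add_mono: "a \<le> b \<Longrightarrow> a + c \<le> b + c"
  and aura_mult_mono: "a \<le> b \<Longrightarrow> a * c \<le> b * c"
  and aura_inverse_ex: "a \<noteq> 0 \<Longrightarrow> \<exists>b. a * b = 1"
  and aura_zero_less_one: "0 < 1"

definition gen_seminorm :: "('a::comm_ring_1 \<Rightarrow> 'r::pos_tot_aura) \<Rightarrow> bool" where
  "gen_seminorm N \<longleftrightarrow> N 0 = 0 \<and> N 1 = 1 \<and>
     (\<forall>a b. N (a + b) \<le> N a + N b) \<and> (\<forall>a b. N (a * b) \<le> N a * N b)"

definition pre_archimedean :: "('a::comm_ring_1 \<Rightarrow> 'r::pos_tot_aura) \<Rightarrow> bool" where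
  "pre_archimedean N \<longleftrightarrow> (\<forall>a b. N (a + b) \<le> max (N 2) 1 * max (N a) (N b))"

definition non_archimedean :: "('a::comm_ring_1 \<Rightarrow> 'r::pos_tot_aura) \<Rightarrow> bool" where
  "non_archimedean N \<longleftrightarrow> (\<forall>a b. N (a + b) \<le> max (N a) (N b))"

definition convex_subgroup :: "'r::pos_tot_aura set \<Rightarrow> bool" where
  "convex_subgroup H \<longleftrightarrow> H \<subseteq> {x. x \<noteq> 0} \<and> 1 \<in> H \<and>
     (\<forall>x\<in>H. \<forall>y\<in>H. x * y \<in> H) \<and> (\<forall>x\<in>H. \<exists>y\<in>H. x * y = 1) \<and>
     (\<forall>g\<in>H. \<forall>k\<in>H. \<forall>h. g < h \<and> h < k \<longrightarrow> h \<in> H)"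

text \<open>Convex subgroup of R^x generated by an element x (trivial subgroup if x = 0,
 since then x is not in R^x).\<close>

definition conv_gen :: "'r::pos_tot_aura \<Rightarrow> 'r set" where
  "conv_gen x = \<Inter>{H. convex_subgroup H \<and> (x \<noteq> 0 \<longrightarrow> x \<in> H)}"

definition coset :: "'r::pos_tot_aura set \<Rightarrow> 'r \<Rightarrow> 'r set" where
  "coset H x = {x * h | h. h \<in> H}"

text \<open>The halo R_Gamma for Gamma = R^x / H: elements are None (the zero) or
 Some C for a coset C.\<close>

fun rg_le :: "'r::pos_tot_aura set option \<Rightarrow> 'r set option \<Rightarrow> bool" where
  "rg_le None _ = True"
| "rg_le (Some C) None = False"
| "rg_le (Some C) (Some D) = (\<exists>c\<in>C. \<exists>d\<in>D. c \<le> d)"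

fun rg_mult :: "'r::pos_tot_aura set option \<Rightarrow> 'r set option \<Rightarrow> 'r set option" where
  "rg_mult None _ = None"
| "rg_mult (Some C) None = None"
| "rg_mult (Some C) (Some D) = Some {c * d | c d. c \<in> C \<and> d \<in> D}"

definition rg_add :: "'r::pos_tot_aura set option \<Rightarrow> 'r set option \<Rightarrow> 'r set option" where
  "rg_add x y = (if rg_le x y then y else x)"

definition rg_one :: "'r::pos_tot_aura set \<Rightarrow> 'r set option" where
  "rg_one H = Some (coset H 1)"

definition induced_norm :: "'r::pos_tot_aura set \<Rightarrow> ('a \<Rightarrow> 'r) \<Rightarrow> 'a \<Rightarrow> 'r set option" where
  "induced_norm H N a = (if N a = 0 then None else Some (coset H (N a)))"

text \<open>A non-archimedean (generalized) seminorm into R_{R^x/H}; since addition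
 in R_Gamma is max, this also contains the triangle inequality.\<close>

definition rg_nonarch_seminorm :: "'r::pos_tot_aura set \<Rightarrow> ('a::comm_ring_1 \<Rightarrow> 'r set option) \<Rightarrow> bool" where
  "rg_nonarch_seminorm H M \<longleftrightarrow> M 0 = None \<and> M 1 = rg_one H \<and>
     (\<forall>a b. rg_le (M (a + b)) (rg_add (M a) (M b))) \<and>
     (\<forall>a b. rg_le (M (a * b)) (rg_mult (M a) (M b)))"

end

theory Submission
  imports Defs
begin

text \<open>If \<open>|2| \<le> 1\<close>, the pre-archimedean bound is already the ultrametric inequality, and
conversely the ultrametric inequality gives \<open>|n| \<le> |1| = 1\<close> by induction on \<open>n\<close>. In general
the pre-archimedean constant \<open>max |2| 1\<close> lies in the convex subgroup \<open>R\<^sub>2\<close>, so it becomes \<open>1\<close>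
in \<open>R\<^sup>\<times>/R\<^sub>2\<close>, where the pre-archimedean bound turns into the ultrametric inequality.\<close>

lemma aura_nonneg: "(0::'r::pos_tot_aura) \<le> c"
  using aura_mult_mono[OF less_imp_le[OF aura_zero_less_one], of c] by simp

lemma gen_seminormD:
  assumes "gen_seminorm N"
  shows "N 0 = 0" "N 1 = 1" "N (a * b) \<le> N a * N b"
  using assms unfolding gen_seminorm_def by auto

lemma non_archimedean_of_nat_le_one:
  assumes "non_archimedean N" "N 0 \<le> 1" "N 1 \<le> 1"
  shows "N (of_nat n) \<le> 1"
proof (induction n)
  case 0
  then show ?case using assms(2) by simp
next
  case (Suc n)
  have "N (of_nat (Suc n)) \<le> max (N 1) (N (of_nat n))"
    using assms(1) unfolding non_archimedean_def by (metis of_nat_Suc)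
  also have "\<dots> \<le> 1"
    using Suc assms(3) by simp
  finally show ?case .
qed

lemma pre_archimedean_non_archimedean:
  assumes "pre_archimedean N" "N 2 \<le> 1"
  shows "non_archimedean N"
  using assms unfolding pre_archimedean_def non_archimedean_def by (simp add: max_def)

lemma one_in_conv_gen: "1 \<in> conv_gen x"
  unfolding conv_gen_def convex_subgroup_def by blast

lemma convex_subgroup_mult: "convex_subgroup H \<Longrightarrow> a \<in> H \<Longrightarrow> b \<in> H \<Longrightarrow> a * b \<in> H"
  unfolding convex_subgroup_def by blast

lemma mult_in_conv_gen: "a \<in> conv_gen x \<Longrightarrow> b \<in> conv_gen x \<Longrightarrow> a * b \<in> conv_gen x"
  unfolding conv_gen_def by (blast intro: convex_subgroup_mult)

lemma max_one_in_conv_gen: "max x 1 \<in> conv_gen (x::'r::pos_tot_aura)"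
proof (cases "x \<le> 1")
  case True
  then show ?thesis using one_in_conv_gen by (simp add: max_def)
next
  case False
  then have "x \<noteq> 0" using aura_nonneg[of 1] by auto
  with False show ?thesis unfolding conv_gen_def by (simp add: max_def)
qed

lemma rg_le_coset_iff:
  "rg_le (Some (coset H x)) (Some (coset H y)) \<longleftrightarrow> (\<exists>h\<in>H. \<exists>k\<in>H. x * h \<le> y * k)"
  unfolding coset_def by auto

lemma rg_le_induced_norm_iff:
  "rg_le (induced_norm H N a) (induced_norm H N b) \<longleftrightarrow>
     N a = 0 \<or> N b \<noteq> 0 \<and> (\<exists>h\<in>H. \<exists>k\<in>H. N a * h \<le> N b * k)"
  unfolding induced_norm_def by (simp only: rg_le_coset_iff split: if_split) simp

text \<open>Since the order of \<open>R\<^bsub>R\<^sup>\<times>/H\<^esub>\<close> only compares cosets, the class chosen by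
\<open>rg_add\<close> need not be that of \<open>max |a| |b|\<close>; it dominates it up to factors from \<open>H\<close>.\<close>

lemma rg_add_induced_norm:
  assumes "1 \<in> H"
  obtains c where "c \<in> {a, b}" "rg_add (induced_norm H N a) (induced_norm H N b) = induced_norm H N c"
    and "N c = 0 \<Longrightarrow> max (N a) (N b) = 0"
    and "\<exists>h\<in>H. \<exists>k\<in>H. max (N a) (N b) * h \<le> N c * k"
proof (cases "rg_le (induced_norm H N a) (induced_norm H N b)")
  case True
  then have le: "N a = 0 \<or> N b \<noteq> 0 \<and> (\<exists>h\<in>H. \<exists>k\<in>H. N a * h \<le> N b * k)"
    by (simp only: rg_le_induced_norm_iff)
  have "\<exists>h\<in>H. \<exists>k\<in>H. max (N a) (N b) * h \<le> N b * k"
  proof (cases "N a \<le> N b")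
    case True
    then show ?thesis using assms by (auto simp: max_def)
  next
    case False
    then have "N a \<noteq> 0" using aura_nonneg[of "N b"] by auto
    with False le show ?thesis by (simp add: max_def)
  qed
  moreover have "N b = 0 \<Longrightarrow> max (N a) (N b) = 0"
    using le by simp
  ultimately show ?thesis using True that[of b] by (simp add: rg_add_def)
next
  case False
  then have "N a \<noteq> 0" "\<not> (N b \<noteq> 0 \<and> N a * 1 \<le> N b * 1)"
    using assms by (simp_all only: rg_le_induced_norm_iff) blast+
  then have "N b < N a"
    using aura_nonneg[of "N a"] by auto
  then have "max (N a) (N b) * 1 \<le> N a * 1"
    by simp
  with False \<open>N a \<noteq> 0\<close> assms show ?thesis
    by (intro that[of a]) (auto simp: rg_add_def)
qed

lemma induced_norm_add:
  assumes H: "1 \<in> H" "\<And>h k. h \<in> H \<Longrightarrow> k \<in> H \<Longrightarrow> h * k \<in> H"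
    and "m \<in> H" and bound: "N (a + b) \<le> m * max (N a) (N b)"
  shows "rg_le (induced_norm H N (a + b)) (rg_add (induced_norm H N a) (induced_norm H N b))"
proof -
  obtain c where "c \<in> {a, b}"
    and add: "rg_add (induced_norm H N a) (induced_norm H N b) = induced_norm H N c"
    and zero: "N c = 0 \<Longrightarrow> max (N a) (N b) = 0"
    and "\<exists>h\<in>H. \<exists>k\<in>H. max (N a) (N b) * h \<le> N c * k"
    using rg_add_induced_norm[OF H(1), of a b N] by blast
  then obtain h k where hk: "h \<in> H" "k \<in> H" "max (N a) (N b) * h \<le> N c * k"
    by blast
  have "N (a + b) * h \<le> m * (max (N a) (N b) * h)"
    using aura_mult_mono[OF bound, of h] by (simp add: mult.assoc)
  also have "\<dots> \<le> m * (N c * k)"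
    using aura_mult_mono[OF hk(3), of m] by (simp add: mult.commute)
  finally have "N (a + b) * h \<le> N c * (m * k)"
    by (simp add: mult_ac)
  moreover have "N c = 0 \<Longrightarrow> N (a + b) = 0"
    using zero bound aura_nonneg[of "N (a + b)"] by (simp add: antisym)
  ultimately show ?thesis
    unfolding add rg_le_induced_norm_iff using hk(1) H(2)[OF \<open>m \<in> H\<close> hk(2)] by blast
qed

lemma induced_norm_mult:
  assumes "1 \<in> H" and bound: "N (a * b) \<le> N a * N b"
  shows "rg_le (induced_norm H N (a * b)) (rg_mult (induced_norm H N a) (induced_norm H N b))"
proof (cases "N (a * b) = 0")
  case True
  then show ?thesis by (simp add: induced_norm_def)
next
  case False
  with bound aura_nonneg[of "N (a * b)"] have "N a \<noteq> 0" "N b \<noteq> 0"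
    by (auto simp: antisym)
  moreover have "N (a * b) \<in> coset H (N (a * b))"
    using \<open>1 \<in> H\<close> unfolding coset_def by force
  moreover have "N a * N b \<in> {c * d |c d. c \<in> coset H (N a) \<and> d \<in> coset H (N b)}"
    using \<open>1 \<in> H\<close> unfolding coset_def by force
  ultimately show ?thesis
    using False bound by (auto simp: induced_norm_def)
qed

lemma induced_norm_rg_nonarch_seminorm:
  assumes "gen_seminorm N"
    and H: "1 \<in> H" "\<And>h k. h \<in> H \<Longrightarrow> k \<in> H \<Longrightarrow> h * k \<in> H"
    and "m \<in> H" and "\<And>a b. N (a + b) \<le> m * max (N a) (N b)"
  shows "rg_nonarch_seminorm H (induced_norm H N)"
proof -
  have "rg_le (induced_norm H N (a + b)) (rg_add (induced_norm H N a) (induced_norm H N b))" for a b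
    using induced_norm_add[OF H \<open>m \<in> H\<close>] assms(5) by blast
  moreover have "rg_le (induced_norm H N (a * b)) (rg_mult (induced_norm H N a) (induced_norm H N b))"
    for a b
    using induced_norm_mult[OF H(1)] gen_seminormD(3)[OF assms(1)] by blast
  ultimately show ?thesis
    unfolding rg_nonarch_seminorm_def using gen_seminormD(1,2)[OF assms(1)] aura_zero_less_one
    by (simp add: induced_norm_def rg_one_def)
qed

theorem lemma2p6:
  fixes N :: "'a::comm_ring_1 \<Rightarrow> 'r::pos_tot_aura"
  assumes "gen_seminorm N"
    and "pre_archimedean N"
  shows "(non_archimedean N \<longleftrightarrow> (\<forall>n::nat. N (of_nat n) \<le> 1))
    \<and> ((\<forall>n::nat. N (of_nat n) \<le> 1) \<longleftrightarrow> N 2 \<le> 1)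
    \<and> rg_nonarch_seminorm (conv_gen (N 2)) (induced_norm (conv_gen (N 2)) N)"
proof -
  have N01: "N 0 \<le> 1" "N 1 \<le> 1"
    using gen_seminormD[OF assms(1)] aura_nonneg[of 1] by simp_all
  have "non_archimedean N \<Longrightarrow> \<forall>n::nat. N (of_nat n) \<le> 1"
    using non_archimedean_of_nat_le_one[OF _ N01] by blast
  moreover have "(\<forall>n::nat. N (of_nat n) \<le> 1) \<Longrightarrow> N 2 \<le> 1"
    by (metis of_nat_numeral)
  moreover have "N 2 \<le> 1 \<Longrightarrow> non_archimedean N"
    using pre_archimedean_non_archimedean[OF assms(2)] .
  moreover have "rg_nonarch_seminorm (conv_gen (N 2)) (induced_norm (conv_gen (N 2)) N)"
    using induced_norm_rg_nonarch_seminorm[OF assms(1) one_in_conv_gen mult_in_conv_gen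
        max_one_in_conv_gen] assms(2)
    unfolding pre_archimedean_def by blast
  ultimately show ?thesis by blast
qed

end
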